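(* Let $n\ge 2$ be an integer, let $\pi(x)$ denote the number of primes $\le x$ for real $x\ge 0$, and let $\omega(n)$ denote the number of distinct prime factors of $n$. Then $$\omega(n)=\sum_{i=1}^{\lfloor n/2\rfloor}\left[\pi\left(\frac{n}{i}\right)-\pi\left(\frac{n-1}{i}\right)\right].$$ *)

theory Defs
  imports "HOL-Computational_Algebra.Primes" Complex_Main
begin

definition prime_pi :: "real \<Rightarrow> nat" where
  "prime_pi x = card {p :: nat. prime p \<and> real p \<le> x}"

definition omega :: "nat \<Rightarrow> nat" where
  "omega n = card (prime_factors n)"

end

theory Submission
  imports Defs
begin

text \<open>
  For \<open>i \<ge> 1\<close> a prime \<open>p\<close> satisfies \<open>p \<le> n/i\<close> but not \<open>p \<le> (n-1)/i\<close> exactly when \<open>p i = n\<close>,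
  so the \<open>i\<close>-th summand is 1 if \<open>i\<close> is a divisor of \<open>n\<close> with prime cofactor and 0 otherwise.
  The map \<open>p \<mapsto> n/p\<close> is a bijection from the prime factors of \<open>n\<close> onto these divisors,
  all of which lie in \<open>[1, n/2]\<close>.
\<close>

lemma finite_primes_le: "finite {p :: nat. prime p \<and> real p \<le> x}"
proof (rule finite_subset)
  show "{p :: nat. prime p \<and> real p \<le> x} \<subseteq> {..nat \<lceil>x\<rceil>}"
    by (auto simp: le_nat_iff ceiling_le_iff le_ceiling_iff)
qed simp

lemma prime_pi_div_eq:
  fixes n i :: nat
  assumes "i > 0"
  shows "prime_pi (real n / real i)
       = prime_pi ((real n - 1) / real i) + (if i dvd n \<and> prime (n div i) then 1 else 0)"
proof -
  define A where "A = {p :: nat. prime p \<and> real p \<le> real n / real i}"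
  define B where "B = {p :: nat. prime p \<and> real p \<le> (real n - 1) / real i}"
  have le_A: "real p \<le> real n / real i \<longleftrightarrow> p * i \<le> n" for p
    using assms by (simp add: pos_le_divide_eq flip: of_nat_mult)
  have le_B: "real p \<le> (real n - 1) / real i \<longleftrightarrow> p * i < n" for p
    using assms by (simp add: pos_le_divide_eq flip: of_nat_mult) linarith
  have "B \<subseteq> A"
    using le_A le_B by (auto simp: A_def B_def)
  moreover have "finite A"
    unfolding A_def by (rule finite_primes_le)
  ultimately have "card A = card B + card (A - B)"
    by (metis card_Diff_subset card_mono finite_subset le_add_diff_inverse)
  moreover have "A - B = {p. prime p \<and> p * i = n}"
    using le_A le_B by (auto simp: A_def B_def)
  moreover have "{p. prime p \<and> p * i = n} = (if i dvd n \<and> prime (n div i) then {n div i} else {})"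
    using assms by (auto elim!: dvdE)
  ultimately show ?thesis
    by (simp add: prime_pi_def A_def B_def)
qed

lemma bij_betw_prime_factors_cofactor:
  fixes n :: nat
  assumes "n > 0"
  shows "bij_betw (\<lambda>p. n div p) (prime_factors n) {i. i dvd n \<and> prime (n div i)}"
proof (rule bij_betw_byWitness[where f' = "\<lambda>i. n div i"])
  have div_div: "n div (n div d) = d" if "d dvd n" for d
    using that assms by (elim dvdE) auto
  then show "\<forall>p\<in>prime_factors n. n div (n div p) = p"
    "\<forall>i\<in>{i. i dvd n \<and> prime (n div i)}. n div (n div i) = i"
    by auto
  show "(\<lambda>p. n div p) ` prime_factors n \<subseteq> {i. i dvd n \<and> prime (n div i)}"
    using div_div assms by (auto simp: prime_factors_dvd intro: dvd_triv_left elim!: dvdE)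
  show "(\<lambda>i. n div i) ` {i. i dvd n \<and> prime (n div i)} \<subseteq> prime_factors n"
    using assms by (auto simp: prime_factors_dvd elim!: dvdE)
qed

lemma omega_eq_card_prime_cofactors:
  "n > 0 \<Longrightarrow> omega n = card {i. i dvd n \<and> prime (n div i)}"
  unfolding omega_def by (rule bij_betw_same_card[OF bij_betw_prime_factors_cofactor])

lemma prime_cofactor_le_half:
  fixes n i :: nat
  assumes "i dvd n" "prime (n div i)"
  shows "i \<in> {1..n div 2}"
proof -
  obtain p where p: "prime p" "n = i * p"
    using assms by (auto elim!: dvdE)
  then have "i > 0" "p \<ge> 2"
    using assms prime_ge_2_nat by (auto intro: Nat.gr0I)
  then have "i * 2 \<le> n"
    using p by simp
  with \<open>i > 0\<close> show ?thesis
    by auto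
qed

theorem mainTheorem5:
  fixes n :: nat
  assumes "n \<ge> 2"
  shows "int (omega n) =
    (\<Sum>i = 1..n div 2. int (prime_pi (real n / real i)) - int (prime_pi ((real n - 1) / real i)))"
proof -
  define D where "D = {i. i dvd n \<and> prime (n div i)}"
  have "D \<subseteq> {1..n div 2}"
    using prime_cofactor_le_half by (auto simp: D_def)
  have "(\<Sum>i = 1..n div 2. int (prime_pi (real n / real i)) - int (prime_pi ((real n - 1) / real i)))
      = (\<Sum>i = 1..n div 2. if i \<in> D then 1 else 0)"
    by (rule sum.cong) (auto simp: prime_pi_div_eq D_def)
  also have "\<dots> = int (card D)"
    using \<open>D \<subseteq> {1..n div 2}\<close> by (simp add: sum.If_cases Int_absorb1)
  also have "card D = omega n"
    using assms by (simp add: omega_eq_card_prime_cofactors D_def)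
  finally show ?thesis ..
qed

end
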